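(* Let $W\in[0,1]^{k\times k}$ be a symmetric positive semidefinite matrix with all diagonal entries equal to $1$, let ${\boldsymbol\mu}\in\mathbb{R}^k$, and consider the collaborative learning problem with strategy space $\mathbb{R}_+^k$ and linear utilities ${\bf u}({\boldsymbol\theta})=W{\boldsymbol\theta}$ and thresholds $\mu_i$. Then the program $$\min\ \sum_{i=1}^k\theta_i\quad\text{s.t.}\quad W{\boldsymbol\theta}\ge{\boldsymbol\mu},\ \ {\boldsymbol\theta}\ge\mathbf{0},\ \ {\boldsymbol\theta}^\top W{\boldsymbol\theta}-{\boldsymbol\mu}^\top{\boldsymbol\theta}\le0$$ is a convex program, and its optimal solutions are optimal stable equilibria (stable equilibria minimizing $\mathbf{1}^\top{\boldsymbol\theta}$).
   Context: ${\boldsymbol\theta}$ is feasible if $u_i({\boldsymbol\theta})\ge\mu_i$ for all $i$. A feasible ${\boldsymbol\theta}\in\mathbb{R}_+^k$ is a stable equilibrium if for no $i$ is there $0\le\theta_i'<\theta_i$ with $u_i(\theta_i',{\boldsymbol\theta}_{-i})\ge\mu_i$, where $(x,{\boldsymbol\theta}_{-i})$ denotes ${\boldsymbol\theta}$ with $i$-th entry replaced by $x$. *)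

theory Defs
  imports "HOL-Analysis.Analysis"
begin

definition nonneg_vec :: "real^'k \<Rightarrow> bool" where
  "nonneg_vec \<theta> \<longleftrightarrow> (\<forall>i. 0 \<le> \<theta> $ i)"

definition feasible :: "(real^'k \<Rightarrow> real^'k) \<Rightarrow> real^'k \<Rightarrow> real^'k \<Rightarrow> bool" where
  "feasible u \<mu> \<theta> \<longleftrightarrow> (\<forall>i. u \<theta> $ i \<ge> \<mu> $ i)"

definition stable_equilibrium ::
  "(real^'k \<Rightarrow> real^'k) \<Rightarrow> real^'k \<Rightarrow> real^'k \<Rightarrow> bool" where
  "stable_equilibrium u \<mu> \<theta> \<longleftrightarrow>
     nonneg_vec \<theta> \<and> feasible u \<mu> \<theta> \<and>
     \<not> (\<exists>i x. 0 \<le> x \<and> x < \<theta> $ i \<and> u (\<chi> j. if j = i then x else \<theta> $ j) $ i \<ge> \<mu> $ i)"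

definition total :: "real^'k \<Rightarrow> real" where
  "total \<theta> = (\<Sum>i\<in>UNIV. \<theta> $ i)"

definition optimal_stable_equilibrium ::
  "(real^'k \<Rightarrow> real^'k) \<Rightarrow> real^'k \<Rightarrow> real^'k \<Rightarrow> bool" where
  "optimal_stable_equilibrium u \<mu> \<theta> \<longleftrightarrow>
     stable_equilibrium u \<mu> \<theta> \<and>
     (\<forall>\<theta>'. stable_equilibrium u \<mu> \<theta>' \<longrightarrow> total \<theta> \<le> total \<theta>')"

definition program_feasible :: "real^'k^'k \<Rightarrow> real^'k \<Rightarrow> (real^'k) set" where
  "program_feasible W \<mu> = {\<theta>. (\<forall>i. (W *v \<theta>) $ i \<ge> \<mu> $ i) \<and> nonneg_vec \<theta> \<and>
       \<theta> \<bullet> (W *v \<theta>) - \<mu> \<bullet> \<theta> \<le> 0}"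

end

theory Submission
  imports Defs
begin

text \<open>Since \<open>W\<close> has unit diagonal, agent \<open>i\<close> changing \<open>\<theta>\<^sub>i\<close> to \<open>x\<close> changes its own utility by
  exactly \<open>x - \<theta>\<^sub>i\<close>. Hence a nonnegative feasible \<open>\<theta>\<close> is stable iff complementary slackness
  \<open>\<theta>\<^sub>i ((W\<theta>)\<^sub>i - \<mu>\<^sub>i) = 0\<close> holds for every \<open>i\<close>. These terms are nonnegative and sum to
  \<open>\<theta>\<^sup>TW\<theta> - \<mu>\<^sup>T\<theta>\<close>, so the quadratic constraint says that all of them vanish: the feasible
  region of the program is precisely the set of stable equilibria, and minimising \<open>\<one>\<^sup>T\<theta>\<close> over
  it yields optimal stable equilibria. Convexity holds because the quadratic form of a positive
  semidefinite matrix is convex and all other constraints are affine.\<close>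

lemma convex_on_linear:
  fixes f :: "'a::real_vector \<Rightarrow> real"
  assumes "linear f" and "convex S"
  shows "convex_on S f"
  using assms by (simp add: convex_on_def linear_add linear_scale)

lemma concave_on_linear:
  fixes f :: "'a::real_vector \<Rightarrow> real"
  assumes "linear f" and "convex S"
  shows "concave_on S f"
  using assms by (simp add: concave_on_def convex_on_linear linear_compose_neg)

lemma convex_on_quadratic_form:
  fixes f :: "'a::real_inner \<Rightarrow> 'a"
  assumes "linear f" and psd: "\<And>x. 0 \<le> x \<bullet> f x" and "convex S"
  shows "convex_on S (\<lambda>x. x \<bullet> f x)"
  unfolding convex_on_def
proof (intro conjI ballI allI impI)
  fix x y :: 'a and u v :: real
  assume u: "0 \<le> u" and v: "0 \<le> v" and uv: "u + v = 1"
  have v_eq: "v = 1 - u" using uv by simp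
  have "u * (x \<bullet> f x) + v * (y \<bullet> f y) - (u *\<^sub>R x + v *\<^sub>R y) \<bullet> f (u *\<^sub>R x + v *\<^sub>R y)
      = u * v * ((x - y) \<bullet> f (x - y))"
    using \<open>linear f\<close> unfolding v_eq
    by (simp add: linear_add linear_scale linear_diff inner_add_left inner_add_right
        inner_diff_left inner_diff_right algebra_simps)
  moreover have "0 \<le> u * v * ((x - y) \<bullet> f (x - y))"
    using u v psd by simp
  ultimately show "(u *\<^sub>R x + v *\<^sub>R y) \<bullet> f (u *\<^sub>R x + v *\<^sub>R y) \<le> u * (x \<bullet> f x) + v * (y \<bullet> f y)"
    by linarith
qed (rule \<open>convex S\<close>)

lemma convex_sublevel_set:
  assumes "convex_on S f"
  shows "convex {x \<in> S. f x \<le> c}"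
  unfolding convex_def
proof (intro allI impI ballI CollectI conjI)
  fix x y and u v :: real
  assume "x \<in> {x \<in> S. f x \<le> c}" "y \<in> {x \<in> S. f x \<le> c}" and uv: "0 \<le> u" "0 \<le> v" "u + v = 1"
  then show "u *\<^sub>R x + v *\<^sub>R y \<in> S" "f (u *\<^sub>R x + v *\<^sub>R y) \<le> c"
    using convex_on_imp_convex[OF assms] convex_lower[OF assms, of x y u v]
    by (auto simp: convex_def)
qed

lemma matrix_vector_mult_update_nth:
  fixes A :: "real^'n^'n"
  shows "(A *v (\<chi> j. if j = i then x else \<theta> $ j)) $ i = (A *v \<theta>) $ i + A $ i $ i * (x - \<theta> $ i)"
proof -
  have "A $ i $ j * (if j = i then x else \<theta> $ j)
      = A $ i $ j * \<theta> $ j + (if j = i then A $ i $ i * (x - \<theta> $ i) else 0)" for j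
    by (simp add: algebra_simps)
  then show ?thesis
    by (simp add: matrix_vector_mult_def sum.distrib)
qed

lemma stable_equilibrium_linear_iff:
  fixes W :: "real^'n^'n"
  assumes diag_pos: "\<forall>i. 0 < W $ i $ i"
  shows "stable_equilibrium (\<lambda>\<theta>. W *v \<theta>) \<mu> \<theta> \<longleftrightarrow>
      nonneg_vec \<theta> \<and> feasible (\<lambda>\<theta>. W *v \<theta>) \<mu> \<theta> \<and> (\<forall>i. \<theta> $ i = 0 \<or> (W *v \<theta>) $ i = \<mu> $ i)"
proof -
  have no_cheaper_deviation: "(\<nexists>x. 0 \<le> x \<and> x < \<theta> $ i \<and> \<mu> $ i \<le> (W *v \<theta>) $ i + W $ i $ i * (x - \<theta> $ i))
      \<longleftrightarrow> \<theta> $ i = 0 \<or> (W *v \<theta>) $ i = \<mu> $ i"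
    if "0 \<le> \<theta> $ i" and "\<mu> $ i \<le> (W *v \<theta>) $ i" for i
  proof
    assume "\<nexists>x. 0 \<le> x \<and> x < \<theta> $ i \<and> \<mu> $ i \<le> (W *v \<theta>) $ i + W $ i $ i * (x - \<theta> $ i)"
    moreover
    have "\<exists>x. 0 \<le> x \<and> x < \<theta> $ i \<and> \<mu> $ i \<le> (W *v \<theta>) $ i + W $ i $ i * (x - \<theta> $ i)"
      if "0 < \<theta> $ i" and "\<mu> $ i < (W *v \<theta>) $ i"
    proof (intro exI conjI)
      \<comment> \<open>the smallest contribution that still meets the threshold, truncated at \<open>0\<close>\<close>
      let ?x = "max 0 (\<theta> $ i - ((W *v \<theta>) $ i - \<mu> $ i) / W $ i $ i)"
      show "0 \<le> ?x" "?x < \<theta> $ i"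
        using that diag_pos by auto
      have "W $ i $ i * (\<theta> $ i - ((W *v \<theta>) $ i - \<mu> $ i) / W $ i $ i - \<theta> $ i)
          \<le> W $ i $ i * (?x - \<theta> $ i)"
        using diag_pos by (intro mult_left_mono) (auto intro: less_imp_le)
      moreover have "W $ i $ i * (\<theta> $ i - ((W *v \<theta>) $ i - \<mu> $ i) / W $ i $ i - \<theta> $ i)
          = \<mu> $ i - (W *v \<theta>) $ i"
        using diag_pos by (simp add: field_simps less_imp_neq[symmetric])
      ultimately show "\<mu> $ i \<le> (W *v \<theta>) $ i + W $ i $ i * (?x - \<theta> $ i)"
        by linarith
    qed
    ultimately show "\<theta> $ i = 0 \<or> (W *v \<theta>) $ i = \<mu> $ i"
      using that by fastforce
  next
    assume "\<theta> $ i = 0 \<or> (W *v \<theta>) $ i = \<mu> $ i"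
    then show "\<nexists>x. 0 \<le> x \<and> x < \<theta> $ i \<and> \<mu> $ i \<le> (W *v \<theta>) $ i + W $ i $ i * (x - \<theta> $ i)"
      using diag_pos[rule_format, of i] by (auto simp: zero_le_mult_iff)
  qed
  show ?thesis
    unfolding stable_equilibrium_def nonneg_vec_def feasible_def matrix_vector_mult_update_nth
    using no_cheaper_deviation by blast
qed

lemma program_feasible_eq_stable_equilibria:
  fixes W :: "real^'n^'n"
  assumes diag_pos: "\<forall>i. 0 < W $ i $ i"
  shows "program_feasible W \<mu> = {\<theta>. stable_equilibrium (\<lambda>\<theta>. W *v \<theta>) \<mu> \<theta>}"
proof -
  have slackness: "\<theta> \<bullet> (W *v \<theta>) - \<mu> \<bullet> \<theta> \<le> 0 \<longleftrightarrow> (\<forall>i. \<theta> $ i = 0 \<or> (W *v \<theta>) $ i = \<mu> $ i)"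
    if "nonneg_vec \<theta>" and "feasible (\<lambda>\<theta>. W *v \<theta>) \<mu> \<theta>" for \<theta>
  proof -
    have terms_nonneg: "0 \<le> \<theta> $ i * ((W *v \<theta>) $ i - \<mu> $ i)" for i
      using that by (simp add: nonneg_vec_def feasible_def)
    have quadratic_eq_sum: "\<theta> \<bullet> (W *v \<theta>) - \<mu> \<bullet> \<theta> = (\<Sum>i\<in>UNIV. \<theta> $ i * ((W *v \<theta>) $ i - \<mu> $ i))"
      by (simp add: inner_vec_def sum_subtractf algebra_simps)
    have "0 \<le> (\<Sum>i\<in>UNIV. \<theta> $ i * ((W *v \<theta>) $ i - \<mu> $ i))"
      by (rule sum_nonneg) (rule terms_nonneg)
    moreover have "(\<Sum>i\<in>UNIV. \<theta> $ i * ((W *v \<theta>) $ i - \<mu> $ i)) = 0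
        \<longleftrightarrow> (\<forall>i. \<theta> $ i * ((W *v \<theta>) $ i - \<mu> $ i) = 0)"
      using terms_nonneg by (simp add: sum_nonneg_eq_0_iff)
    ultimately show ?thesis
      unfolding quadratic_eq_sum by auto
  qed
  show ?thesis
    using slackness
    unfolding program_feasible_def stable_equilibrium_linear_iff[OF diag_pos]
    by (auto simp: feasible_def)
qed

lemma convex_on_total: "convex_on UNIV total"
  by (rule convex_on_linear) (simp_all add: linear_iff total_def sum.distrib sum_distrib_left)

lemma convex_on_quadratic_constraint:
  fixes W :: "real^'n^'n"
  assumes psd: "\<forall>x. 0 \<le> x \<bullet> (W *v x)"
  shows "convex_on UNIV (\<lambda>\<theta>. \<theta> \<bullet> (W *v \<theta>) - \<mu> \<bullet> \<theta>)"
  using psd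
  by (intro convex_on_diff convex_on_quadratic_form concave_on_linear bounded_linear.linear
      bounded_linear_inner_right) simp_all

lemma convex_on_utility_constraint:
  fixes W :: "real^'n^'n"
  shows "convex_on UNIV (\<lambda>\<theta>. \<mu> $ i - (W *v \<theta>) $ i)"
  by (intro convex_on_diff concave_on_linear linear_compose[of "(*v) W" "\<lambda>v. v $ i", unfolded o_def])
    (simp_all add: convex_on_const bounded_linear.linear[OF bounded_linear_vec_nth])

lemma convex_on_neg_nth: "convex_on UNIV (\<lambda>\<theta>::real^'n. - (\<theta> $ i))"
  by (rule convex_on_linear) (simp_all add: linear_iff)

lemma convex_program_feasible:
  fixes W :: "real^'n^'n"
  assumes psd: "\<forall>x. 0 \<le> x \<bullet> (W *v x)"
  shows "convex (program_feasible W \<mu>)"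
proof -
  have "program_feasible W \<mu> =
      (\<Inter>i. {\<theta> \<in> UNIV. \<mu> $ i - (W *v \<theta>) $ i \<le> 0}) \<inter> (\<Inter>i. {\<theta> \<in> UNIV. - (\<theta> $ i) \<le> 0})
      \<inter> {\<theta> \<in> UNIV. \<theta> \<bullet> (W *v \<theta>) - \<mu> \<bullet> \<theta> \<le> 0}"
    by (auto simp: program_feasible_def nonneg_vec_def)
  then show ?thesis
    using psd
    by (simp only:) (intro convex_Int convex_INT convex_sublevel_set convex_on_utility_constraint
        convex_on_neg_nth convex_on_quadratic_constraint)
qed

theorem theorem5:
  fixes W :: "real^'k^'k" and \<mu> :: "real^'k"
  assumes entries: "\<forall>i j. 0 \<le> W $ i $ j \<and> W $ i $ j \<le> 1"
    and sym: "transpose W = W"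
    and psd: "\<forall>x. 0 \<le> x \<bullet> (W *v x)"
    and diag: "\<forall>i. W $ i $ i = 1"
  shows "convex_on UNIV total
       \<and> convex_on UNIV (\<lambda>\<theta>. \<theta> \<bullet> (W *v \<theta>) - \<mu> \<bullet> \<theta>)
       \<and> (\<forall>i. convex_on UNIV (\<lambda>\<theta>. \<mu> $ i - (W *v \<theta>) $ i))
       \<and> (\<forall>i. convex_on UNIV (\<lambda>\<theta>::real^'k. - (\<theta> $ i)))
       \<and> convex (program_feasible W \<mu>)
       \<and> (\<forall>\<theta>. (\<theta> \<in> program_feasible W \<mu> \<and>
               (\<forall>\<theta>'\<in>program_feasible W \<mu>. total \<theta> \<le> total \<theta>'))
             \<longrightarrow> optimal_stable_equilibrium (\<lambda>\<theta>. W *v \<theta>) \<mu> \<theta>)"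
proof -
  \<comment> \<open>The bounds on the entries and the symmetry of \<open>W\<close> are not needed.\<close>
  have diag_pos: "\<forall>i. 0 < W $ i $ i"
    using diag by simp
  have "optimal_stable_equilibrium (\<lambda>\<theta>. W *v \<theta>) \<mu> \<theta>"
    if "\<theta> \<in> program_feasible W \<mu>" and "\<forall>\<theta>'\<in>program_feasible W \<mu>. total \<theta> \<le> total \<theta>'" for \<theta>
    using that unfolding optimal_stable_equilibrium_def program_feasible_eq_stable_equilibria[OF diag_pos]
    by blast
  then show ?thesis
    using psd convex_on_total convex_on_quadratic_constraint convex_on_utility_constraint
      convex_on_neg_nth convex_program_feasible
    by blast
qed

end
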